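(* Let $\mathcal{G}=(V,E)$ be a graph with $|V|=n$ and let $\mathcal{P}$ be a local destination-based failover protocol on $\mathcal{G}$. Then one can construct a local destination-based failover protocol $\mathcal{P}_K$ on the complete graph $K_n$ with node set $V$ such that, for all-to-one routing towards any destination $d\in V$ and any set $\mathcal{F}^{(K)}$ of failed edges of $K_n$, the distribution of the loads of the nodes under $\mathcal{P}_K$ in $K_n$ with failures $\mathcal{F}^{(K)}$ is the same as under $\mathcal{P}$ in $\mathcal{G}$ with failures $\mathcal{F}=E\cap\mathcal{F}^{(K)}$ (indeed, every packet follows the same path with the same probability in both settings).
   Context: Local destination-based failover routing: $\Gamma(v)$ denotes the neighbors of $v$ in the graph; given failed edges $\mathcal{F}$, $\mathcal{F}_v=\{w~|~(v,w)\in\mathcal{F}\}$. A local destination-based failover protocol is a family of distributions $\mathcal{D}(v,\mathcal{F}_v,d)$ over $(\Gamma(v)\setminus\mathcal{F}_v)\cup\{v\}$ for all $v,d\in V$ and $\mathcal{F}_v\subseteq\Gamma(v)$. Given the failure set, each node $v$ independently draws its routing entry $\alpha(v,\mathcal{F}_v,d)$ from $\mathcal{D}(v,\mathcal{F}_v,d)$ and forwards packets with destination $d$ there. All-to-one routing towards $d$: every node $v\neq d$ sends one flow to $d$ along the entries. The load of a node is the number of flows passing through it (including its own); nodes on a forwarding cycle traversed by a flow have infinite load. *)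

theory Defs
  imports "HOL-Probability.Probability" "HOL-Library.Extended_Nat"
begin

definition graph :: "'a set \<Rightarrow> ('a \<times> 'a) set \<Rightarrow> bool" where
  "graph V E \<longleftrightarrow> finite V \<and> E \<subseteq> V \<times> V \<and> sym E \<and> (\<forall>v. (v, v) \<notin> E)"

definition complete_edges :: "'a set \<Rightarrow> ('a \<times> 'a) set" where
  "complete_edges V = {(u, w). u \<in> V \<and> w \<in> V \<and> u \<noteq> w}"

definition nbrs :: "('a \<times> 'a) set \<Rightarrow> 'a \<Rightarrow> 'a set" where
  "nbrs E v = {w. (v, w) \<in> E}"

definition failed_at :: "('a \<times> 'a) set \<Rightarrow> 'a \<Rightarrow> 'a set" where
  "failed_at F v = {w. (v, w) \<in> F}"

definition failure_set :: "('a \<times> 'a) set \<Rightarrow> ('a \<times> 'a) set \<Rightarrow> bool" where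
  "failure_set E F \<longleftrightarrow> F \<subseteq> E \<and> sym F"

definition failover_protocol ::
  "'a set \<Rightarrow> ('a \<times> 'a) set \<Rightarrow> ('a \<Rightarrow> 'a set \<Rightarrow> 'a \<Rightarrow> 'a pmf) \<Rightarrow> bool" where
  "failover_protocol V E D \<longleftrightarrow>
     (\<forall>v\<in>V. \<forall>d\<in>V. \<forall>Fv. Fv \<subseteq> nbrs E v \<longrightarrow>
        set_pmf (D v Fv d) \<subseteq> (nbrs E v - Fv) \<union> {v})"

definition entries_pmf ::
  "'a set \<Rightarrow> ('a \<Rightarrow> 'a set \<Rightarrow> 'a \<Rightarrow> 'a pmf) \<Rightarrow> ('a \<times> 'a) set \<Rightarrow> 'a \<Rightarrow> ('a \<Rightarrow> 'a) pmf" where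
  "entries_pmf V D F d = Pi_pmf V undefined (\<lambda>v. D v (failed_at F v) d)"

definition visits :: "('a \<Rightarrow> 'a) \<Rightarrow> 'a \<Rightarrow> 'a \<Rightarrow> 'a \<Rightarrow> bool" where
  "visits \<alpha> d v u \<longleftrightarrow> (\<exists>k. (\<alpha> ^^ k) v = u \<and> (\<forall>j<k. (\<alpha> ^^ j) v \<noteq> d))"

definition on_cycle :: "('a \<Rightarrow> 'a) \<Rightarrow> 'a \<Rightarrow> 'a \<Rightarrow> bool" where
  "on_cycle \<alpha> d u \<longleftrightarrow> (\<exists>m>0. (\<alpha> ^^ m) u = u \<and> (\<forall>j<m. (\<alpha> ^^ j) u \<noteq> d))"

definition load :: "'a set \<Rightarrow> ('a \<Rightarrow> 'a) \<Rightarrow> 'a \<Rightarrow> 'a \<Rightarrow> enat" where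
  "load V \<alpha> d u =
     (if \<exists>v\<in>V - {d}. visits \<alpha> d v u \<and> on_cycle \<alpha> d u then \<infinity>
      else enat (card {v\<in>V - {d}. visits \<alpha> d v u}))"

text \<open>The path of the packet from v: iterate the entries, stopping at d.\<close>
definition packet_path :: "('a \<Rightarrow> 'a) \<Rightarrow> 'a \<Rightarrow> 'a \<Rightarrow> nat \<Rightarrow> 'a" where
  "packet_path \<alpha> d v k = ((\<alpha>(d := d)) ^^ k) v"

end

theory Submission
  imports Defs
begin

text \<open>The protocol on \<open>K\<^sub>n\<close> lets each node ignore failures of links that are not edges of
  \<open>\<G>\<close> and otherwise draw its entry exactly as \<open>\<P>\<close> does. Then the joint distribution of the
  routing entries is literally the same in both settings, so every function of the entries
  (loads, packet paths) has the same distribution.\<close>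

definition extended_protocol ::
  "('a \<times> 'a) set \<Rightarrow> ('a \<Rightarrow> 'a set \<Rightarrow> 'a \<Rightarrow> 'a pmf) \<Rightarrow> 'a \<Rightarrow> 'a set \<Rightarrow> 'a \<Rightarrow> 'a pmf" where
  "extended_protocol E D = (\<lambda>v Fv d. D v (Fv \<inter> nbrs E v) d)"

lemma failed_at_Int: "failed_at (E \<inter> F) v = failed_at F v \<inter> nbrs E v"
  unfolding failed_at_def nbrs_def by auto

lemma entries_pmf_extended_protocol:
  "entries_pmf V (extended_protocol E D) F d = entries_pmf V D (E \<inter> F) d"
  unfolding entries_pmf_def extended_protocol_def failed_at_Int ..

lemma graph_subset_complete_edges: "graph V E \<Longrightarrow> E \<subseteq> complete_edges V"
  unfolding graph_def complete_edges_def by auto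

lemma nbrs_mono: "E \<subseteq> E' \<Longrightarrow> nbrs E v \<subseteq> nbrs E' v"
  unfolding nbrs_def by auto

lemma failover_protocol_extended_protocol:
  assumes "failover_protocol V E D" and "E \<subseteq> E'"
  shows "failover_protocol V E' (extended_protocol E D)"
  unfolding failover_protocol_def
proof (intro ballI allI impI)
  fix v d Fv assume "v \<in> V" "d \<in> V"
  then have "set_pmf (D v (Fv \<inter> nbrs E v) d) \<subseteq> (nbrs E v - Fv) \<union> {v}"
    using assms(1) unfolding failover_protocol_def by blast
  then show "set_pmf (extended_protocol E D v Fv d) \<subseteq> (nbrs E' v - Fv) \<union> {v}"
    unfolding extended_protocol_def using nbrs_mono[OF assms(2), of v] by blast
qed

theorem mainTheorem6:
  fixes V :: "'a set" and E :: "('a \<times> 'a) set" and D :: "'a \<Rightarrow> 'a set \<Rightarrow> 'a \<Rightarrow> 'a pmf"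
  assumes "graph V E"
    and "failover_protocol V E D"
  shows "\<exists>DK. failover_protocol V (complete_edges V) DK \<and>
    (\<forall>d\<in>V. \<forall>FK. failure_set (complete_edges V) FK \<longrightarrow>
       map_pmf (\<lambda>\<alpha>. \<lambda>u\<in>V. load V \<alpha> d u) (entries_pmf V DK FK d)
         = map_pmf (\<lambda>\<alpha>. \<lambda>u\<in>V. load V \<alpha> d u) (entries_pmf V D (E \<inter> FK) d)
     \<and> map_pmf (\<lambda>\<alpha>. \<lambda>v\<in>V. packet_path \<alpha> d v) (entries_pmf V DK FK d)
         = map_pmf (\<lambda>\<alpha>. \<lambda>v\<in>V. packet_path \<alpha> d v) (entries_pmf V D (E \<inter> FK) d))"
proof (intro exI conjI ballI allI impI)
  show "failover_protocol V (complete_edges V) (extended_protocol E D)"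
    using failover_protocol_extended_protocol[OF assms(2) graph_subset_complete_edges[OF assms(1)]] .
qed (simp_all only: entries_pmf_extended_protocol)

end
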